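(* Let $S$ be a nonempty complete lattice and let $F:S\to 2^S$ be a lower V-ascending correspondence such that for every $x\in S$, the value $F(x)$ is nonempty and chain-subcomplete downwards in $S$. Then $F$ has a least fixed point, i.e. the set $\{s\in S:s\in F(s)\}$ is nonempty and has a least element.
   Context: A poset $S$ is a complete lattice if every nonempty subset has a supremum and infimum in $S$. A subset $T\subset S$ is chain-subcomplete downwards in $S$ if for every nonempty chain $C\subset T$, $\inf_S C$ exists and belongs to $T$. A correspondence $F:S\to 2^S$ on a lattice $S$ is lower V-ascending if for all $x<x'$ in $S$ (strict inequality), every $y\in F(x)$ and every $y'\in F(x')$, one has $y\wedge y'\in F(x)$. *)

theory Defs
  imports Main
begin

definition chain_subcomplete_down :: "'a::complete_lattice set \<Rightarrow> bool" where
  "chain_subcomplete_down T \<longleftrightarrow>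
     (\<forall>C. C \<noteq> {} \<longrightarrow> C \<subseteq> T \<longrightarrow> Complete_Partial_Order.chain (\<le>) C \<longrightarrow> Inf C \<in> T)"

definition lower_V_ascending :: "('a::lattice \<Rightarrow> 'a set) \<Rightarrow> bool" where
  "lower_V_ascending F \<longleftrightarrow>
     (\<forall>x x' y y'. x < x' \<longrightarrow> y \<in> F x \<longrightarrow> y' \<in> F x' \<longrightarrow> inf y y' \<in> F x)"

end

theory Submission
  imports Defs
begin

text \<open>As in Tarski's theorem, the candidate is the infimum \<open>m\<close> of the prefixed points,
i.e.\ of those \<open>x\<close> with some \<open>y \<in> F x\<close> below \<open>x\<close>; every fixed point is prefixed, so
\<open>m\<close> is below all of them. If \<open>m\<close> were not prefixed, a minimal element \<open>w\<close> of \<open>F m\<close>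
(which exists by Zorn's lemma) would satisfy \<open>inf w y = w\<close> for every prefixed \<open>x > m\<close> with
witness \<open>y\<close>, by lower V-ascendingness and minimality, so \<open>w \<le> m\<close> after all. Hence \<open>m\<close> is
prefixed with some witness \<open>w \<le> m\<close>; if \<open>w < m\<close> then lower V-ascendingness makes \<open>w\<close>
prefixed too, contradicting \<open>m \<le> w\<close>. So \<open>m \<in> F m\<close>.\<close>

definition prefixed_points :: "('a::order \<Rightarrow> 'a set) \<Rightarrow> 'a set" where
  "prefixed_points F = {x. \<exists>y\<in>F x. y \<le> x}"

lemma fixed_point_in_prefixed_points: "x \<in> F x \<Longrightarrow> x \<in> prefixed_points F"
  unfolding prefixed_points_def by blast

lemma chain_subcomplete_down_has_minimal:
  fixes A :: "'a::complete_lattice set"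
  assumes "A \<noteq> {}" and "chain_subcomplete_down A"
  shows "\<exists>m\<in>A. \<forall>a\<in>A. a \<le> m \<longrightarrow> a = m"
proof -
  let ?ge = "relation_of (\<lambda>x y. y \<le> x) A"
  have partial: "partial_order_on A ?ge"
    by (rule partial_order_on_relation_ofI) auto
  have "\<exists>u\<in>A. \<forall>a\<in>C. u \<le> a" if C: "C \<in> Chains ?ge" for C
  proof (cases "C = {}")
    case True
    then show ?thesis using \<open>A \<noteq> {}\<close> by auto
  next
    case False
    have "C \<subseteq> A"
      using C unfolding Chains_def relation_of_def by auto
    moreover have "Complete_Partial_Order.chain (\<le>) C"
      using C unfolding Chains_def relation_of_def Complete_Partial_Order.chain_def by auto
    ultimately have "Inf C \<in> A"
      using \<open>chain_subcomplete_down A\<close> False unfolding chain_subcomplete_down_def by blast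
    then show ?thesis by (auto intro: Inf_lower)
  qed
  from predicate_Zorn[OF partial this] show ?thesis by auto
qed

lemma lower_V_ascending_minimal_le:
  assumes "lower_V_ascending F"
    and "w \<in> F m" and minimal: "\<forall>a\<in>F m. a \<le> w \<longrightarrow> a = w"
    and "m < x" and "y \<in> F x" and "y \<le> x"
  shows "w \<le> x"
proof -
  have "inf w y \<in> F m"
    using assms unfolding lower_V_ascending_def by blast
  then have "inf w y = w"
    using minimal by simp
  then show ?thesis
    using \<open>y \<le> x\<close> by (metis inf.absorb_iff1 order_trans)
qed

lemma Inf_prefixed_points_in_prefixed_points:
  fixes F :: "'a::complete_lattice \<Rightarrow> 'a set"
  assumes "lower_V_ascending F"
    and "F (Inf (prefixed_points F)) \<noteq> {}"
    and "chain_subcomplete_down (F (Inf (prefixed_points F)))"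
  shows "Inf (prefixed_points F) \<in> prefixed_points F"
proof (rule ccontr)
  let ?m = "Inf (prefixed_points F)"
  assume not_prefixed: "?m \<notin> prefixed_points F"
  obtain w where w: "w \<in> F ?m" and minimal: "\<forall>a\<in>F ?m. a \<le> w \<longrightarrow> a = w"
    using chain_subcomplete_down_has_minimal assms(2,3) by blast
  have "w \<le> x" if x: "x \<in> prefixed_points F" for x
  proof -
    obtain y where "y \<in> F x" "y \<le> x"
      using x unfolding prefixed_points_def by blast
    moreover have "?m < x"
      using x not_prefixed Inf_lower[OF x] by (auto simp: less_le)
    ultimately show ?thesis
      using lower_V_ascending_minimal_le[OF assms(1) w minimal] by blast
  qed
  then have "w \<le> ?m"
    by (rule Inf_greatest)
  then show False
    using w not_prefixed unfolding prefixed_points_def by blast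
qed

lemma lower_V_ascending_strict_witness_prefixed:
  assumes "lower_V_ascending F" and "F w \<noteq> {}" and "w \<in> F x" and "w < x"
  shows "w \<in> prefixed_points F"
proof -
  obtain v where "v \<in> F w"
    using \<open>F w \<noteq> {}\<close> by blast
  then have "inf v w \<in> F w"
    using assms unfolding lower_V_ascending_def by blast
  then show ?thesis
    unfolding prefixed_points_def using inf.cobounded2 by blast
qed

theorem lemma2p9:
  fixes F :: "'a::complete_lattice \<Rightarrow> 'a set"
  assumes "lower_V_ascending F"
    and "\<And>x. F x \<noteq> {}"
    and "\<And>x. chain_subcomplete_down (F x)"
  shows "\<exists>s. s \<in> F s \<and> (\<forall>t. t \<in> F t \<longrightarrow> s \<le> t)"
proof -
  let ?m = "Inf (prefixed_points F)"
  have "?m \<in> prefixed_points F"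
    using Inf_prefixed_points_in_prefixed_points assms by blast
  then obtain w where w: "w \<in> F ?m" "w \<le> ?m"
    unfolding prefixed_points_def by blast
  have "\<not> w < ?m"
  proof
    assume "w < ?m"
    then have "w \<in> prefixed_points F"
      using lower_V_ascending_strict_witness_prefixed assms(1,2) w(1) by blast
    then show False
      using Inf_lower \<open>w < ?m\<close> by (metis leD)
  qed
  then have "?m \<in> F ?m"
    using w by (simp add: order.order_iff_strict)
  moreover have "?m \<le> t" if "t \<in> F t" for t
    using Inf_lower fixed_point_in_prefixed_points that by blast
  ultimately show ?thesis by blast
qed

end
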